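(* Let $d\ge1$, $W\ge2$, $n\ge1$, $\Omega=[0,1]^d$, and let $\Phi:(B_{\ell_\infty^{\tilde n}},\|\cdot\|_{\ell_\infty^{\tilde n}})\to C(\Omega)$ be the ReLU neural network parametrization map of width $W$ and depth $n$ described in the context. Then there is a constant $C'=C'(d)$ depending only on $d$ such that $$\|\Phi(y)-\Phi(y')\|_{C(\Omega)}\le C'nW^n\|y-y'\|_{\ell_\infty^{\tilde n}}\quad\text{for all }y,y'\in B_{\ell_\infty^{\tilde n}}.$$
   Context: Let $\tilde n=W(d+1)+(n-1)W(W+1)+(W+1)$, $\|y\|_{\ell_\infty^{\tilde n}}=\max_i|y_i|$ and $B_{\ell_\infty^{\tilde n}}=\{y\in\mathbb{R}^{\tilde n}:\|y\|_{\ell_\infty^{\tilde n}}\le1\}$. A vector $y\in\mathbb{R}^{\tilde n}$ lists (in a fixed order) the entries of affine maps $A^{(0)}(x)=A_0x+b^{(0)}$ with $A_0\in\mathbb{R}^{W\times d}$, $b^{(0)}\in\mathbb{R}^W$; $A^{(\ell)}(x)=A_\ell x+b^{(\ell)}$ with $A_\ell\in\mathbb{R}^{W\times W}$, $b^{(\ell)}\in\mathbb{R}^W$ for $\ell=1,\dots,n-1$; and $A^{(n)}(x)=A_nx+b^{(n)}$ with $A_n\in\mathbb{R}^{1\times W}$, $b^{(n)}\in\mathbb{R}$. With $\bar\sigma:\mathbb{R}^W\to\mathbb{R}^W$ applying $t\mapsto\max\{t,0\}$ coordinatewise, $\Phi(y)$ is the function $\Omega\to\mathbb{R}$ given by $\Phi(y)=A^{(n)}\circ\bar\sigma\circ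 A^{(n-1)}\circ\cdots\circ\bar\sigma\circ A^{(0)}$. $C(\Omega)$ carries the sup norm. *)

theory Defs
  imports "HOL-Analysis.Analysis"
begin

text \<open>Parameter vectors y in R^ntilde are represented as functions nat => real;
only the entries with index < ntilde are used. Inputs x in [0,1]^d are functions
nat => real with 0 <= x j <= 1 for j < d.\<close>

definition relu :: "real \<Rightarrow> real" where
  "relu t = max t 0"

definition ntilde :: "nat \<Rightarrow> nat \<Rightarrow> nat \<Rightarrow> nat" where
  "ntilde d W n = W * (d + 1) + (n - 1) * W * (W + 1) + (W + 1)"

definition linf_norm :: "nat \<Rightarrow> (nat \<Rightarrow> real) \<Rightarrow> real" where
  "linf_norm N y = Max ({0} \<union> {\<bar>y i\<bar> | i. i < N})"

definition in_unit_ball :: "nat \<Rightarrow> (nat \<Rightarrow> real) \<Rightarrow> bool" where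
  "in_unit_ball N y \<longleftrightarrow> linf_norm N y \<le> 1"

definition in_cube :: "nat \<Rightarrow> (nat \<Rightarrow> real) \<Rightarrow> bool" where
  "in_cube d x \<longleftrightarrow> (\<forall>j<d. 0 \<le> x j \<and> x j \<le> 1)"

text \<open>Fixed order of parameters: layer 0 occupies indices 0 ..< W(d+1); row i of
(A_0 | b^(0)) is stored at i(d+1) .. i(d+1)+d (matrix entries then bias).
Layer l (1 <= l <= n-1) starts at offset W(d+1)+(l-1)W(W+1), row i at
offset + i(W+1) (W matrix entries then bias). The output layer starts at
W(d+1)+(n-1)W(W+1): W entries of A_n, then b^(n).
hidden d W y x l i = i-th coordinate of sigma(A^(l)(... sigma(A^(0) x)).\<close>

fun hidden :: "nat \<Rightarrow> nat \<Rightarrow> (nat \<Rightarrow> real) \<Rightarrow> (nat \<Rightarrow> real) \<Rightarrow> nat \<Rightarrow> nat \<Rightarrow> real" where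
  "hidden d W y x 0 i =
     relu ((\<Sum>j<d. y (i * (d + 1) + j) * x j) + y (i * (d + 1) + d))"
| "hidden d W y x (Suc l) i =
     relu ((\<Sum>j<W. y (W * (d + 1) + l * W * (W + 1) + i * (W + 1) + j) * hidden d W y x l j)
           + y (W * (d + 1) + l * W * (W + 1) + i * (W + 1) + W))"

definition Phi :: "nat \<Rightarrow> nat \<Rightarrow> nat \<Rightarrow> (nat \<Rightarrow> real) \<Rightarrow> (nat \<Rightarrow> real) \<Rightarrow> real" where
  "Phi d W n y x =
     (let off = W * (d + 1) + (n - 1) * W * (W + 1) in
      (\<Sum>j<W. y (off + j) * hidden d W y x (n - 1) j) + y (off + W))"

end

theory Submission
  imports Defs
begin

text \<open>Every hidden neuron and the output are affine maps with coefficients in [-1,1]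
applied to the previous layer, followed (except at the output) by the 1-Lipschitz,
norm-reducing ReLU. Hence the activations of layer l are bounded by (d+2) W^l - 1, and
perturbing the parameters by e changes them by at most (l+1)(d+2) W^l e: the change
of a neuron is e times the size of its inputs plus W times the change of its inputs.
The output behaves like one more such layer, giving (n+1)(d+2) W^n e \<le> 2(d+2) n W^n e.\<close>

definition affine :: "nat \<Rightarrow> (nat \<Rightarrow> real) \<Rightarrow> nat \<Rightarrow> (nat \<Rightarrow> real) \<Rightarrow> real" where
  "affine k y off h = (\<Sum>j<k. y (off + j) * h j) + y (off + k)"

text \<open>layer_offset d W l is where the parameters of hidden layer l + 1 (or, for l = n - 1,
of the output layer) begin.\<close>

definition layer_offset :: "nat \<Rightarrow> nat \<Rightarrow> nat \<Rightarrow> nat" where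
  "layer_offset d W l = W * (d + 1) + l * W * (W + 1)"

lemma hidden_0_eq_affine: "hidden d W y x 0 i = relu (affine d y (i * (d + 1)) x)"
  by (simp add: affine_def)

lemma hidden_Suc_eq_affine:
  "hidden d W y x (Suc l) i =
     relu (affine W y (layer_offset d W l + i * (W + 1)) (hidden d W y x l))"
  by (simp add: affine_def layer_offset_def add.assoc)

lemma Phi_eq_affine:
  "Phi d W n y x = affine W y (layer_offset d W (n - 1)) (hidden d W y x (n - 1))"
  by (simp add: Phi_def affine_def layer_offset_def add.assoc)

lemma layer_offset_Suc: "layer_offset d W (Suc l) = layer_offset d W l + W * (W + 1)"
  by (simp add: layer_offset_def algebra_simps)

lemma ntilde_eq_layer_offset: "n \<ge> 1 \<Longrightarrow> ntilde d W n = layer_offset d W (n - 1) + (W + 1)"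
  by (simp add: ntilde_def layer_offset_def)

lemma relu_nonneg: "relu t \<ge> 0"
  by (simp add: relu_def)

lemma relu_le_abs: "relu t \<le> \<bar>t\<bar>"
  by (simp add: relu_def)

lemma relu_lipschitz: "\<bar>relu a - relu b\<bar> \<le> \<bar>a - b\<bar>"
  by (simp add: relu_def)

lemma hidden_nonneg: "hidden d W y x l i \<ge> 0"
  by (cases l) (simp_all add: relu_nonneg)

lemma abs_affine_le:
  assumes "\<And>j. j \<le> k \<Longrightarrow> \<bar>y (off + j)\<bar> \<le> 1" and "\<And>j. j < k \<Longrightarrow> \<bar>h j\<bar> \<le> H"
  shows "\<bar>affine k y off h\<bar> \<le> real k * H + 1"
proof -
  have "\<bar>\<Sum>j<k. y (off + j) * h j\<bar> \<le> (\<Sum>j<k. \<bar>y (off + j)\<bar> * \<bar>h j\<bar>)"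
    unfolding abs_mult[symmetric] by (rule sum_abs)
  also have "\<dots> \<le> (\<Sum>j<k. 1 * H)"
  proof (intro sum_mono mult_mono)
    fix j assume "j \<in> {..<k}"
    then show "\<bar>y (off + j)\<bar> \<le> 1" "\<bar>h j\<bar> \<le> H"
      using assms by auto
  qed auto
  finally show ?thesis
    using assms(1)[of k] by (simp add: affine_def)
qed

lemma abs_affine_diff_le:
  assumes "\<And>j. j \<le> k \<Longrightarrow> \<bar>y' (off + j)\<bar> \<le> 1"
    and "\<And>j. j \<le> k \<Longrightarrow> \<bar>y (off + j) - y' (off + j)\<bar> \<le> e"
    and "\<And>j. j < k \<Longrightarrow> \<bar>h j\<bar> \<le> H" and "\<And>j. j < k \<Longrightarrow> \<bar>h j - h' j\<bar> \<le> D"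
  shows "\<bar>affine k y off h - affine k y' off h'\<bar> \<le> real k * (e * H + D) + e"
proof -
  let ?a = "\<lambda>j. y (off + j)" and ?a' = "\<lambda>j. y' (off + j)"
  have diff: "affine k y off h - affine k y' off h'
      = (\<Sum>j<k. (?a j - ?a' j) * h j + ?a' j * (h j - h' j)) + (?a k - ?a' k)"
    by (simp add: affine_def sum_subtractf[symmetric] algebra_simps)
  have "\<bar>\<Sum>j<k. (?a j - ?a' j) * h j + ?a' j * (h j - h' j)\<bar>
      \<le> (\<Sum>j<k. \<bar>?a j - ?a' j\<bar> * \<bar>h j\<bar> + \<bar>?a' j\<bar> * \<bar>h j - h' j\<bar>)"
    by (rule order_trans[OF sum_abs sum_mono]) (simp only: abs_mult[symmetric] abs_triangle_ineq)
  also have "\<dots> \<le> (\<Sum>j<k. e * H + 1 * D)"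
  proof (intro sum_mono add_mono mult_mono)
    fix j assume "j \<in> {..<k}"
    then show "\<bar>?a j - ?a' j\<bar> \<le> e" "\<bar>h j\<bar> \<le> H" "\<bar>?a' j\<bar> \<le> 1" "\<bar>h j - h' j\<bar> \<le> D"
      using assms by auto
    then show "0 \<le> e"
      by linarith
  qed auto
  finally have "\<bar>\<Sum>j<k. (?a j - ?a' j) * h j + ?a' j * (h j - h' j)\<bar> \<le> real k * (e * H + D)"
    by simp
  moreover have "\<bar>?a k - ?a' k\<bar> \<le> e"
    using assms(2) by simp
  ultimately show ?thesis
    unfolding diff by (meson abs_triangle_ineq add_mono order_trans)
qed

lemma abs_row_entry_le:
  fixes y :: "nat \<Rightarrow> real"
  assumes "\<forall>m<N. \<bar>y m\<bar> \<le> c" and "off + W * (k + 1) \<le> N" and "i < W" and "j \<le> k"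
  shows "\<bar>y (off + i * (k + 1) + j)\<bar> \<le> c"
proof -
  have "i * (k + 1) + j < i * (k + 1) + (k + 1)"
    using assms(4) by simp
  also have "\<dots> = (i + 1) * (k + 1)"
    by simp
  also have "\<dots> \<le> W * (k + 1)"
    using assms(3) by (intro mult_le_mono1) simp
  finally show ?thesis
    using assms(1,2) by simp
qed

lemma hidden_le:
  assumes "W \<ge> 2" and "in_cube d x" and "\<forall>m<N. \<bar>y m\<bar> \<le> 1"
    and "layer_offset d W l \<le> N" and "i < W"
  shows "hidden d W y x l i \<le> real (d + 2) * real W ^ l - 1"
  using assms(4,5)
proof (induction l arbitrary: i)
  case 0
  have "\<bar>affine d y (i * (d + 1)) x\<bar> \<le> real d * 1 + 1"
  proof (rule abs_affine_le)
    fix j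
    show "j \<le> d \<Longrightarrow> \<bar>y (i * (d + 1) + j)\<bar> \<le> 1"
      using abs_row_entry_le[OF assms(3), of 0 W d i j] 0 by (simp add: layer_offset_def)
    show "j < d \<Longrightarrow> \<bar>x j\<bar> \<le> 1"
      using assms(2) by (simp add: in_cube_def)
  qed
  then show ?case
    using relu_le_abs[of "affine d y (i * (d + 1)) x"]
    by (simp add: hidden_0_eq_affine del: hidden.simps)
next
  case (Suc l)
  let ?A = "real (d + 2) * real W ^ l" and ?off = "layer_offset d W l + i * (W + 1)"
  have "\<bar>affine W y ?off (hidden d W y x l)\<bar> \<le> real W * (?A - 1) + 1"
  proof (rule abs_affine_le)
    fix j
    show "j \<le> W \<Longrightarrow> \<bar>y (?off + j)\<bar> \<le> 1"
      using abs_row_entry_le[OF assms(3), of "layer_offset d W l" W W i j] Suc.prems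
      by (simp add: layer_offset_Suc add.assoc)
    show "j < W \<Longrightarrow> \<bar>hidden d W y x l j\<bar> \<le> ?A - 1"
      using Suc.IH[of j] Suc.prems hidden_nonneg[of d W y x l j] by (simp add: layer_offset_Suc)
  qed
  also have "\<dots> \<le> real (d + 2) * real W ^ Suc l - 1"
    using assms(1) by (simp add: algebra_simps)
  finally show ?case
    using relu_le_abs[of "affine W y ?off (hidden d W y x l)"]
    by (simp add: hidden_Suc_eq_affine del: hidden.simps)
qed

lemma layer_error_step:
  fixes w e A :: real
  assumes "w \<ge> 1" and "e \<ge> 0"
  shows "w * (e * (A - 1) + real (l + 1) * A * e) + e \<le> real (l + 2) * (w * A) * e"
proof -
  have "w * (e * (A - 1) + real (l + 1) * A * e) + e = real (l + 2) * (w * A) * e - (w - 1) * e"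
    by (simp add: algebra_simps)
  then show ?thesis
    using assms by simp
qed

lemma hidden_diff_le:
  assumes "W \<ge> 2" and "in_cube d x" and "e \<ge> 0"
    and "\<forall>m<N. \<bar>y m\<bar> \<le> 1" and "\<forall>m<N. \<bar>y' m\<bar> \<le> 1" and "\<forall>m<N. \<bar>y m - y' m\<bar> \<le> e"
    and "layer_offset d W l \<le> N" and "i < W"
  shows "\<bar>hidden d W y x l i - hidden d W y' x l i\<bar> \<le> real (l + 1) * real (d + 2) * real W ^ l * e"
  using assms(7,8)
proof (induction l arbitrary: i)
  case 0
  let ?off = "i * (d + 1)"
  have "\<bar>affine d y ?off x - affine d y' ?off x\<bar> \<le> real d * (e * 1 + 0) + e"
  proof (rule abs_affine_diff_le)
    fix j
    assume "j \<le> d"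
    then show "\<bar>y' (?off + j)\<bar> \<le> 1" "\<bar>y (?off + j) - y' (?off + j)\<bar> \<le> e"
      using abs_row_entry_le[OF assms(5), of 0 W d i j] 0
        abs_row_entry_le[of N "\<lambda>m. y m - y' m" e 0 W d i j] assms(6)
      by (simp_all add: layer_offset_def)
  next
    fix j
    assume "j < d"
    then show "\<bar>x j\<bar> \<le> 1" "\<bar>x j - x j\<bar> \<le> 0"
      using assms(2) by (simp_all add: in_cube_def)
  qed
  then show ?case
    using relu_lipschitz[of "affine d y ?off x" "affine d y' ?off x"] assms(3)
    by (simp add: hidden_0_eq_affine algebra_simps del: hidden.simps)
next
  case (Suc l)
  let ?A = "real (d + 2) * real W ^ l" and ?off = "layer_offset d W l + i * (W + 1)"
  have "\<bar>affine W y ?off (hidden d W y x l) - affine W y' ?off (hidden d W y' x l)\<bar>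
      \<le> real W * (e * (?A - 1) + real (l + 1) * ?A * e) + e"
  proof (rule abs_affine_diff_le)
    fix j
    assume "j \<le> W"
    then show "\<bar>y' (?off + j)\<bar> \<le> 1" "\<bar>y (?off + j) - y' (?off + j)\<bar> \<le> e"
      using abs_row_entry_le[OF assms(5), of "layer_offset d W l" W W i j] Suc.prems
        abs_row_entry_le[of N "\<lambda>m. y m - y' m" e "layer_offset d W l" W W i j] assms(6)
      by (simp_all add: layer_offset_Suc add.assoc)
  next
    fix j
    assume "j < W"
    then show "\<bar>hidden d W y x l j\<bar> \<le> ?A - 1"
      using hidden_le[OF assms(1,2,4), of l j] Suc.prems hidden_nonneg[of d W y x l j]
      by (simp add: layer_offset_Suc)
    show "\<bar>hidden d W y x l j - hidden d W y' x l j\<bar> \<le> real (l + 1) * ?A * e"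
      using Suc.IH[of j] Suc.prems \<open>j < W\<close> by (simp add: layer_offset_Suc mult.assoc)
  qed
  also have "\<dots> \<le> real (l + 2) * (real W * ?A) * e"
    using assms(1,3) by (intro layer_error_step) auto
  also have "\<dots> = real (Suc l + 1) * real (d + 2) * real W ^ Suc l * e"
    by (simp add: mult_ac)
  finally show ?case
    using relu_lipschitz[of "affine W y ?off (hidden d W y x l)"
        "affine W y' ?off (hidden d W y' x l)"]
    by (simp add: hidden_Suc_eq_affine del: hidden.simps)
qed

lemma Phi_diff_le:
  assumes "W \<ge> 2" and "n \<ge> 1" and "in_cube d x" and "e \<ge> 0"
    and "\<forall>m<ntilde d W n. \<bar>y m\<bar> \<le> 1" and "\<forall>m<ntilde d W n. \<bar>y' m\<bar> \<le> 1"
    and "\<forall>m<ntilde d W n. \<bar>y m - y' m\<bar> \<le> e"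
  shows "\<bar>Phi d W n y x - Phi d W n y' x\<bar> \<le> real (n + 1) * real (d + 2) * real W ^ n * e"
proof -
  let ?l = "n - 1" and ?off = "layer_offset d W (n - 1)"
  let ?A = "real (d + 2) * real W ^ ?l"
  have N: "?off \<le> ntilde d W n" and row: "\<And>j. j \<le> W \<Longrightarrow> ?off + j < ntilde d W n"
    using ntilde_eq_layer_offset[OF assms(2)] by auto
  have "\<And>j. j < W \<Longrightarrow> \<bar>hidden d W y x ?l j\<bar> \<le> ?A - 1"
    using hidden_le[OF assms(1,3,5) N] hidden_nonneg by simp
  moreover have "\<And>j. j < W \<Longrightarrow>
      \<bar>hidden d W y x ?l j - hidden d W y' x ?l j\<bar> \<le> real (?l + 1) * ?A * e"
    using hidden_diff_le[OF assms(1,3,4,5,6,7) N] by (simp add: mult.assoc)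
  ultimately have "\<bar>Phi d W n y x - Phi d W n y' x\<bar>
      \<le> real W * (e * (?A - 1) + real (?l + 1) * ?A * e) + e"
    unfolding Phi_eq_affine using row assms(6,7) by (intro abs_affine_diff_le) auto
  also have "\<dots> \<le> real (?l + 2) * (real W * ?A) * e"
    using assms(1,4) by (intro layer_error_step) auto
  also have "real (?l + 2) * (real W * ?A) * e = real (n + 1) * real (d + 2) * real W ^ n * e"
    using assms(2) by (simp add: power_eq_if mult_ac)
  finally show ?thesis .
qed

lemma abs_le_linf_norm: "i < N \<Longrightarrow> \<bar>y i\<bar> \<le> linf_norm N y"
  unfolding linf_norm_def by (rule Max_ge) auto

lemma linf_norm_nonneg: "linf_norm N y \<ge> 0"
  unfolding linf_norm_def by (rule Max_ge) auto

theorem theorem7p1: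
  fixes d :: nat
  assumes "d \<ge> 1"
  shows "\<exists>C'::real. \<forall>W n y y' x.
           W \<ge> 2 \<longrightarrow> n \<ge> 1 \<longrightarrow>
           in_unit_ball (ntilde d W n) y \<longrightarrow> in_unit_ball (ntilde d W n) y' \<longrightarrow>
           in_cube d x \<longrightarrow>
           \<bar>Phi d W n y x - Phi d W n y' x\<bar>
             \<le> C' * real n * real W ^ n * linf_norm (ntilde d W n) (\<lambda>i. y i - y' i)"
proof (intro exI[of _ "2 * real (d + 2)"] allI impI)
  fix W n y y' x
  assume W: "W \<ge> 2" and n: "n \<ge> 1" and y: "in_unit_ball (ntilde d W n) y"
    and y': "in_unit_ball (ntilde d W n) y'" and x: "in_cube d x"
  let ?N = "ntilde d W n"
  let ?e = "linf_norm ?N (\<lambda>i. y i - y' i)"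
  have "\<forall>m<?N. \<bar>y m\<bar> \<le> 1" "\<forall>m<?N. \<bar>y' m\<bar> \<le> 1"
    using y y' abs_le_linf_norm unfolding in_unit_ball_def by (meson order_trans)+
  moreover have "\<forall>m<?N. \<bar>y m - y' m\<bar> \<le> ?e"
    using abs_le_linf_norm[of _ ?N "\<lambda>i. y i - y' i"] by simp
  ultimately have "\<bar>Phi d W n y x - Phi d W n y' x\<bar>
      \<le> real (n + 1) * real (d + 2) * real W ^ n * ?e"
    using Phi_diff_le[OF W n x linf_norm_nonneg] by blast
  also have "\<dots> \<le> (2 * real n) * real (d + 2) * real W ^ n * ?e"
    using n by (intro mult_right_mono linf_norm_nonneg) auto
  finally show "\<bar>Phi d W n y x - Phi d W n y' x\<bar> \<le> 2 * real (d + 2) * real n * real W ^ n * ?e"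
    by (simp add: mult_ac)
qed

end
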